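(* Let $X_1,X_2$ be locally compact Hausdorff spaces, $\mathcal{A}_i\subset\mathcal{C}_c(X_i)$ subalgebras, and $M_i,N_i$ uniform norms on $\mathcal{A}_i$ ($i=1,2$). If $M_1\preceq N_1$ and $M_2\preceq N_2$, then $M_1\otimes M_2\preceq N_1\otimes N_2$ on $\mathcal{A}_1\otimes\mathcal{A}_2$.
   Context: A norm $M$ on $\mathcal{A}\subset\mathcal{C}_c(X)$ is uniform if $\|\phi\|_\infty\le F\,M(\phi)$ for some constant $F$ and all $\phi$. For uniform norms on a subalgebra, $M\preceq N$ means there exist $D_1,D_2>0$ with $M(\phi_1)\le D_1N(\phi_1)$ and $M(\phi_1\phi_2)\le D_2N(\phi_1)N(\phi_2)$ for all $\phi_1,\phi_2$. $\mathcal{A}_1\otimes\mathcal{A}_2$ is the subalgebra of $\mathcal{C}_c(X_1\times X_2)$ of finite sums $\sum_i\phi_{1i}\otimes\phi_{2i}$, and $(M_1\otimes M_2)(\phi)=\inf\sum_iM_1(\phi_{1i})M_2(\phi_{2i})$ over all such representations of $\phi$ (projective tensor norm). *)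

theory Defs
  imports "HOL-Analysis.Analysis"
begin

definition Cc :: "('a::topological_space \<Rightarrow> complex) set" where
  "Cc = {f. continuous_on UNIV f \<and> compact (closure {x. f x \<noteq> 0})}"

definition subalgebra_Cc :: "('a::topological_space \<Rightarrow> complex) set \<Rightarrow> bool" where
  "subalgebra_Cc A \<longleftrightarrow> A \<subseteq> Cc \<and> (\<lambda>x. 0) \<in> A \<and>
     (\<forall>f\<in>A. \<forall>g\<in>A. (\<lambda>x. f x + g x) \<in> A \<and> (\<lambda>x. f x * g x) \<in> A) \<and>
     (\<forall>c. \<forall>f\<in>A. (\<lambda>x. c * f x) \<in> A)"

definition norm_on :: "('a \<Rightarrow> complex) set \<Rightarrow> (('a \<Rightarrow> complex) \<Rightarrow> real) \<Rightarrow> bool" where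
  "norm_on A M \<longleftrightarrow>
     (\<forall>f\<in>A. 0 \<le> M f \<and> (M f = 0 \<longleftrightarrow> f = (\<lambda>x. 0))) \<and>
     (\<forall>c. \<forall>f\<in>A. M (\<lambda>x. c * f x) = cmod c * M f) \<and>
     (\<forall>f\<in>A. \<forall>g\<in>A. M (\<lambda>x. f x + g x) \<le> M f + M g)"

definition sup_norm :: "('a \<Rightarrow> complex) \<Rightarrow> real" where
  "sup_norm f = (SUP x. cmod (f x))"

definition uniform_norm_on :: "('a \<Rightarrow> complex) set \<Rightarrow> (('a \<Rightarrow> complex) \<Rightarrow> real) \<Rightarrow> bool" where
  "uniform_norm_on A M \<longleftrightarrow> norm_on A M \<and> (\<exists>F. \<forall>f\<in>A. sup_norm f \<le> F * M f)"

definition norm_preceq :: "('a \<Rightarrow> complex) set \<Rightarrow> (('a \<Rightarrow> complex) \<Rightarrow> real) \<Rightarrow> (('a \<Rightarrow> complex) \<Rightarrow> real) \<Rightarrow> bool" where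
  "norm_preceq A M N \<longleftrightarrow> (\<exists>D1 D2. D1 > 0 \<and> D2 > 0 \<and>
     (\<forall>f\<in>A. M f \<le> D1 * N f) \<and>
     (\<forall>f\<in>A. \<forall>g\<in>A. M (\<lambda>x. f x * g x) \<le> D2 * N f * N g))"

text \<open>The function given by a finite representation (list of pairs) \<Sum>_i f_i \<otimes> g_i.\<close>
definition tensor_sum :: "(('a \<Rightarrow> complex) \<times> ('b \<Rightarrow> complex)) list \<Rightarrow> ('a \<times> 'b \<Rightarrow> complex)" where
  "tensor_sum rs = (\<lambda>(x, y). (\<Sum>r\<leftarrow>rs. fst r x * snd r y))"

definition tensor_reps ::
  "('a \<Rightarrow> complex) set \<Rightarrow> ('b \<Rightarrow> complex) set \<Rightarrow> ('a \<times> 'b \<Rightarrow> complex)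
     \<Rightarrow> (('a \<Rightarrow> complex) \<times> ('b \<Rightarrow> complex)) list set" where
  "tensor_reps A1 A2 \<phi> = {rs. set rs \<subseteq> A1 \<times> A2 \<and> tensor_sum rs = \<phi>}"

text \<open>The algebraic tensor product A1 \<otimes> A2 inside Cc(X1 \<times> X2).\<close>
definition tensor_alg :: "('a \<Rightarrow> complex) set \<Rightarrow> ('b \<Rightarrow> complex) set \<Rightarrow> ('a \<times> 'b \<Rightarrow> complex) set" where
  "tensor_alg A1 A2 = {\<phi>. tensor_reps A1 A2 \<phi> \<noteq> {}}"

definition tensor_norm ::
  "('a \<Rightarrow> complex) set \<Rightarrow> ('b \<Rightarrow> complex) set \<Rightarrow> (('a \<Rightarrow> complex) \<Rightarrow> real) \<Rightarrow> (('b \<Rightarrow> complex) \<Rightarrow> real)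
     \<Rightarrow> ('a \<times> 'b \<Rightarrow> complex) \<Rightarrow> real" where
  "tensor_norm A1 A2 M1 M2 \<phi> =
     Inf ((\<lambda>rs. \<Sum>r\<leftarrow>rs. M1 (fst r) * M2 (snd r)) ` tensor_reps A1 A2 \<phi>)"

end

theory Submission
  imports Defs
begin

text \<open>Both inequalities are checked representation by representation: a representation
  \<open>\<Sum> f\<^sub>i \<otimes> g\<^sub>i\<close> of \<open>\<phi>\<close> has \<open>M\<close>-cost at most \<open>D\<^sub>1\<^sub>1 D\<^sub>1\<^sub>2\<close> times its \<open>N\<close>-cost, and multiplying out
  representations of \<open>\<phi>\<close> and \<open>\<psi>\<close> gives a representation \<open>\<Sum> f\<^sub>i f'\<^sub>j \<otimes> g\<^sub>i g'\<^sub>j\<close> of \<open>\<phi>\<psi>\<close> whose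
  \<open>M\<close>-cost is at most \<open>D\<^sub>2\<^sub>1 D\<^sub>2\<^sub>2\<close> times the product of the two \<open>N\<close>-costs.  Taking infima over
  the representations gives the two conditions of \<open>M\<^sub>1 \<otimes> M\<^sub>2 \<preceq> N\<^sub>1 \<otimes> N\<^sub>2\<close>.\<close>

lemma sum_list_concat_map_map:
  "(\<Sum>p\<leftarrow>concat (map (\<lambda>r. map (e r) ss) rs). h p) = (\<Sum>r\<leftarrow>rs. \<Sum>s\<leftarrow>ss. h (e r s))"
  by (induction rs) (simp_all add: o_def)

lemma sum_list_times_sum_list:
  fixes F G :: "_ \<Rightarrow> 'c::comm_semiring_0"
  shows "(\<Sum>r\<leftarrow>rs. \<Sum>s\<leftarrow>ss. F r * G s) = (\<Sum>r\<leftarrow>rs. F r) * (\<Sum>s\<leftarrow>ss. G s)"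
  by (simp add: sum_list_const_mult sum_list_mult_const)

lemma le_mult_cInf:
  fixes S :: "real set"
  assumes "S \<noteq> {}" "c \<ge> 0" "\<And>a. a \<in> S \<Longrightarrow> x \<le> c * a"
  shows "x \<le> c * Inf S"
proof (cases "c = 0")
  case True
  then show ?thesis using assms by fastforce
next
  case False
  with assms(2) have "c > 0" by simp
  have "x / c \<le> Inf S"
    using assms(1,3) \<open>c > 0\<close> by (intro cInf_greatest) (simp_all add: divide_le_eq mult.commute)
  with \<open>c > 0\<close> show ?thesis by (simp add: divide_le_eq mult.commute)
qed

lemma uniform_norm_on_nonneg: "uniform_norm_on A M \<Longrightarrow> f \<in> A \<Longrightarrow> 0 \<le> M f"
  unfolding uniform_norm_on_def norm_on_def by blast

lemma subalgebra_Cc_mult: "subalgebra_Cc A \<Longrightarrow> f \<in> A \<Longrightarrow> g \<in> A \<Longrightarrow> (\<lambda>x. f x * g x) \<in> A"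
  unfolding subalgebra_Cc_def by blast

definition tensor_rep_cost ::
  "(('a \<Rightarrow> complex) \<Rightarrow> real) \<Rightarrow> (('b \<Rightarrow> complex) \<Rightarrow> real)
     \<Rightarrow> (('a \<Rightarrow> complex) \<times> ('b \<Rightarrow> complex)) list \<Rightarrow> real" where
  "tensor_rep_cost M1 M2 rs = (\<Sum>r\<leftarrow>rs. M1 (fst r) * M2 (snd r))"

lemma tensor_norm_eq_Inf_cost:
  "tensor_norm A1 A2 M1 M2 \<phi> = Inf (tensor_rep_cost M1 M2 ` tensor_reps A1 A2 \<phi>)"
  unfolding tensor_norm_def tensor_rep_cost_def ..

lemma tensor_rep_cost_nonneg:
  assumes "set rs \<subseteq> A1 \<times> A2" "\<And>f. f \<in> A1 \<Longrightarrow> 0 \<le> M1 f" "\<And>g. g \<in> A2 \<Longrightarrow> 0 \<le> M2 g"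
  shows "0 \<le> tensor_rep_cost M1 M2 rs"
  unfolding tensor_rep_cost_def using assms by (intro sum_list_nonneg) auto

lemma tensor_rep_cost_mono:
  assumes "set rs \<subseteq> A1 \<times> A2"
    and "\<And>f. f \<in> A1 \<Longrightarrow> 0 \<le> M1 f" "\<And>g. g \<in> A2 \<Longrightarrow> 0 \<le> M2 g"
    and "\<And>f. f \<in> A1 \<Longrightarrow> M1 f \<le> a1 * N1 f" "\<And>g. g \<in> A2 \<Longrightarrow> M2 g \<le> a2 * N2 g"
  shows "tensor_rep_cost M1 M2 rs \<le> (a1 * a2) * tensor_rep_cost N1 N2 rs"
proof -
  have "tensor_rep_cost M1 M2 rs \<le> (\<Sum>r\<leftarrow>rs. (a1 * a2) * (N1 (fst r) * N2 (snd r)))"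
    unfolding tensor_rep_cost_def
  proof (rule sum_list_mono)
    fix r assume "r \<in> set rs"
    with assms(1) have r: "fst r \<in> A1" "snd r \<in> A2" by auto
    have "M1 (fst r) * M2 (snd r) \<le> (a1 * N1 (fst r)) * (a2 * N2 (snd r))"
      using r assms(2-5) by (intro mult_mono) (auto intro: order_trans)
    then show "M1 (fst r) * M2 (snd r) \<le> (a1 * a2) * (N1 (fst r) * N2 (snd r))"
      by (simp add: algebra_simps)
  qed
  then show ?thesis by (simp add: tensor_rep_cost_def sum_list_const_mult)
qed

lemma tensor_norm_le_cost:
  assumes "rs \<in> tensor_reps A1 A2 \<phi>"
    and "\<And>f. f \<in> A1 \<Longrightarrow> 0 \<le> M1 f" "\<And>g. g \<in> A2 \<Longrightarrow> 0 \<le> M2 g"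
  shows "tensor_norm A1 A2 M1 M2 \<phi> \<le> tensor_rep_cost M1 M2 rs"
  unfolding tensor_norm_eq_Inf_cost
proof (rule cInf_lower)
  show "tensor_rep_cost M1 M2 rs \<in> tensor_rep_cost M1 M2 ` tensor_reps A1 A2 \<phi>"
    using assms(1) by blast
  show "bdd_below (tensor_rep_cost M1 M2 ` tensor_reps A1 A2 \<phi>)"
    using assms(2,3) by (intro bdd_belowI[where m = 0])
      (auto simp: tensor_reps_def intro: tensor_rep_cost_nonneg)
qed

lemma tensor_norm_greatest:
  assumes "\<phi> \<in> tensor_alg A1 A2" "c \<ge> 0"
    and "\<And>rs. rs \<in> tensor_reps A1 A2 \<phi> \<Longrightarrow> x \<le> c * tensor_rep_cost M1 M2 rs"
  shows "x \<le> c * tensor_norm A1 A2 M1 M2 \<phi>"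
  unfolding tensor_norm_eq_Inf_cost
  using assms by (intro le_mult_cInf) (auto simp: tensor_alg_def)

lemma tensor_norm_nonneg:
  assumes "\<phi> \<in> tensor_alg A1 A2"
    and "\<And>f. f \<in> A1 \<Longrightarrow> 0 \<le> M1 f" "\<And>g. g \<in> A2 \<Longrightarrow> 0 \<le> M2 g"
  shows "0 \<le> tensor_norm A1 A2 M1 M2 \<phi>"
proof -
  have "0 \<le> 1 * tensor_norm A1 A2 M1 M2 \<phi>"
  proof (rule tensor_norm_greatest[OF assms(1)])
    fix rs assume "rs \<in> tensor_reps A1 A2 \<phi>"
    then have "set rs \<subseteq> A1 \<times> A2" by (simp add: tensor_reps_def)
    from tensor_rep_cost_nonneg[OF this assms(2,3)] show "0 \<le> 1 * tensor_rep_cost M1 M2 rs"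
      by simp
  qed simp
  then show ?thesis by simp
qed

lemma tensor_norm_mono:
  assumes "\<phi> \<in> tensor_alg A1 A2" "a1 \<ge> 0" "a2 \<ge> 0"
    and "\<And>f. f \<in> A1 \<Longrightarrow> 0 \<le> M1 f" "\<And>g. g \<in> A2 \<Longrightarrow> 0 \<le> M2 g"
    and "\<And>f. f \<in> A1 \<Longrightarrow> M1 f \<le> a1 * N1 f" "\<And>g. g \<in> A2 \<Longrightarrow> M2 g \<le> a2 * N2 g"
  shows "tensor_norm A1 A2 M1 M2 \<phi> \<le> (a1 * a2) * tensor_norm A1 A2 N1 N2 \<phi>"
proof (rule tensor_norm_greatest[OF assms(1)])
  show "0 \<le> a1 * a2" using assms(2,3) by simp
  fix rs assume rs: "rs \<in> tensor_reps A1 A2 \<phi>"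
  then have "set rs \<subseteq> A1 \<times> A2" by (simp add: tensor_reps_def)
  have "tensor_norm A1 A2 M1 M2 \<phi> \<le> tensor_rep_cost M1 M2 rs"
    using rs assms(4,5) by (rule tensor_norm_le_cost)
  also have "\<dots> \<le> (a1 * a2) * tensor_rep_cost N1 N2 rs"
    using \<open>set rs \<subseteq> A1 \<times> A2\<close> assms(4-7) by (rule tensor_rep_cost_mono)
  finally show "tensor_norm A1 A2 M1 M2 \<phi> \<le> (a1 * a2) * tensor_rep_cost N1 N2 rs" .
qed

definition tensor_rep_mult ::
  "(('a \<Rightarrow> complex) \<times> ('b \<Rightarrow> complex)) list \<Rightarrow> (('a \<Rightarrow> complex) \<times> ('b \<Rightarrow> complex)) list
     \<Rightarrow> (('a \<Rightarrow> complex) \<times> ('b \<Rightarrow> complex)) list" where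
  "tensor_rep_mult rs ss =
     concat (map (\<lambda>r. map (\<lambda>s. (\<lambda>x. fst r x * fst s x, \<lambda>y. snd r y * snd s y)) ss) rs)"

lemma tensor_sum_tensor_rep_mult:
  "tensor_sum (tensor_rep_mult rs ss) = (\<lambda>z. tensor_sum rs z * tensor_sum ss z)"
proof
  fix z :: "'a \<times> 'b"
  obtain x y where z: "z = (x, y)" by fastforce
  have "(\<Sum>r\<leftarrow>rs. \<Sum>s\<leftarrow>ss. (fst r x * fst s x) * (snd r y * snd s y))
      = (\<Sum>r\<leftarrow>rs. \<Sum>s\<leftarrow>ss. (fst r x * snd r y) * (fst s x * snd s y))"
    by (simp add: algebra_simps)
  also have "\<dots> = (\<Sum>r\<leftarrow>rs. fst r x * snd r y) * (\<Sum>s\<leftarrow>ss. fst s x * snd s y)"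
    by (rule sum_list_times_sum_list)
  finally show "tensor_sum (tensor_rep_mult rs ss) z = tensor_sum rs z * tensor_sum ss z"
    unfolding z tensor_sum_def tensor_rep_mult_def by (simp add: sum_list_concat_map_map)
qed

lemma tensor_rep_mult_in_tensor_reps:
  assumes "rs \<in> tensor_reps A1 A2 \<phi>" "ss \<in> tensor_reps A1 A2 \<psi>"
    and "\<And>f g. f \<in> A1 \<Longrightarrow> g \<in> A1 \<Longrightarrow> (\<lambda>x. f x * g x) \<in> A1"
    and "\<And>f g. f \<in> A2 \<Longrightarrow> g \<in> A2 \<Longrightarrow> (\<lambda>x. f x * g x) \<in> A2"
  shows "tensor_rep_mult rs ss \<in> tensor_reps A1 A2 (\<lambda>z. \<phi> z * \<psi> z)"
proof -
  have "set (tensor_rep_mult rs ss) \<subseteq> A1 \<times> A2"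
    using assms unfolding tensor_reps_def tensor_rep_mult_def by force
  with assms(1,2) show ?thesis
    unfolding tensor_reps_def by (simp add: tensor_sum_tensor_rep_mult)
qed

lemma tensor_rep_cost_tensor_rep_mult:
  assumes "set rs \<subseteq> A1 \<times> A2" "set ss \<subseteq> A1 \<times> A2"
    and "\<And>f g. f \<in> A1 \<Longrightarrow> g \<in> A1 \<Longrightarrow> (\<lambda>x. f x * g x) \<in> A1"
    and "\<And>f g. f \<in> A2 \<Longrightarrow> g \<in> A2 \<Longrightarrow> (\<lambda>x. f x * g x) \<in> A2"
    and "\<And>f. f \<in> A1 \<Longrightarrow> 0 \<le> M1 f" "\<And>g. g \<in> A2 \<Longrightarrow> 0 \<le> M2 g"
    and "\<And>f g. f \<in> A1 \<Longrightarrow> g \<in> A1 \<Longrightarrow> M1 (\<lambda>x. f x * g x) \<le> b1 * N1 f * N1 g"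
    and "\<And>f g. f \<in> A2 \<Longrightarrow> g \<in> A2 \<Longrightarrow> M2 (\<lambda>x. f x * g x) \<le> b2 * N2 f * N2 g"
  shows "tensor_rep_cost M1 M2 (tensor_rep_mult rs ss)
           \<le> (b1 * b2) * tensor_rep_cost N1 N2 rs * tensor_rep_cost N1 N2 ss"
proof -
  have "tensor_rep_cost M1 M2 (tensor_rep_mult rs ss)
      = (\<Sum>r\<leftarrow>rs. \<Sum>s\<leftarrow>ss. M1 (\<lambda>x. fst r x * fst s x) * M2 (\<lambda>y. snd r y * snd s y))"
    unfolding tensor_rep_cost_def tensor_rep_mult_def by (simp add: sum_list_concat_map_map)
  also have "\<dots> \<le> (\<Sum>r\<leftarrow>rs. \<Sum>s\<leftarrow>ss.
                    ((b1 * b2) * (N1 (fst r) * N2 (snd r))) * (N1 (fst s) * N2 (snd s)))"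
  proof (intro sum_list_mono)
    fix r s assume "r \<in> set rs" "s \<in> set ss"
    with assms(1,2) have "fst r \<in> A1" "snd r \<in> A2" "fst s \<in> A1" "snd s \<in> A2" by auto
    then have "M1 (\<lambda>x. fst r x * fst s x) \<le> b1 * N1 (fst r) * N1 (fst s)"
        "M2 (\<lambda>y. snd r y * snd s y) \<le> b2 * N2 (snd r) * N2 (snd s)"
        "0 \<le> M1 (\<lambda>x. fst r x * fst s x)" "0 \<le> M2 (\<lambda>y. snd r y * snd s y)"
      using assms(3-8) by blast+
    then have "M1 (\<lambda>x. fst r x * fst s x) * M2 (\<lambda>y. snd r y * snd s y)
        \<le> (b1 * N1 (fst r) * N1 (fst s)) * (b2 * N2 (snd r) * N2 (snd s))"
      by (meson mult_mono order_trans)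
    then show "M1 (\<lambda>x. fst r x * fst s x) * M2 (\<lambda>y. snd r y * snd s y)
        \<le> ((b1 * b2) * (N1 (fst r) * N2 (snd r))) * (N1 (fst s) * N2 (snd s))"
      by (simp add: algebra_simps)
  qed
  also have "\<dots> = (\<Sum>r\<leftarrow>rs. (b1 * b2) * (N1 (fst r) * N2 (snd r)))
                  * (\<Sum>s\<leftarrow>ss. N1 (fst s) * N2 (snd s))"
    by (rule sum_list_times_sum_list)
  also have "\<dots> = (b1 * b2) * tensor_rep_cost N1 N2 rs * tensor_rep_cost N1 N2 ss"
    by (simp add: tensor_rep_cost_def sum_list_const_mult)
  finally show ?thesis .
qed

lemma tensor_norm_mult:
  assumes "\<phi> \<in> tensor_alg A1 A2" "\<psi> \<in> tensor_alg A1 A2" "b1 \<ge> 0" "b2 \<ge> 0"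
    and "\<And>f g. f \<in> A1 \<Longrightarrow> g \<in> A1 \<Longrightarrow> (\<lambda>x. f x * g x) \<in> A1"
    and "\<And>f g. f \<in> A2 \<Longrightarrow> g \<in> A2 \<Longrightarrow> (\<lambda>x. f x * g x) \<in> A2"
    and "\<And>f. f \<in> A1 \<Longrightarrow> 0 \<le> M1 f" "\<And>g. g \<in> A2 \<Longrightarrow> 0 \<le> M2 g"
    and "\<And>f. f \<in> A1 \<Longrightarrow> 0 \<le> N1 f" "\<And>g. g \<in> A2 \<Longrightarrow> 0 \<le> N2 g"
    and "\<And>f g. f \<in> A1 \<Longrightarrow> g \<in> A1 \<Longrightarrow> M1 (\<lambda>x. f x * g x) \<le> b1 * N1 f * N1 g"
    and "\<And>f g. f \<in> A2 \<Longrightarrow> g \<in> A2 \<Longrightarrow> M2 (\<lambda>x. f x * g x) \<le> b2 * N2 f * N2 g"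
  shows "tensor_norm A1 A2 M1 M2 (\<lambda>z. \<phi> z * \<psi> z)
           \<le> (b1 * b2) * tensor_norm A1 A2 N1 N2 \<phi> * tensor_norm A1 A2 N1 N2 \<psi>"
proof -
  let ?m = "tensor_norm A1 A2 M1 M2 (\<lambda>z. \<phi> z * \<psi> z)"
  have cost_bound: "?m \<le> (b1 * b2) * tensor_rep_cost N1 N2 rs * tensor_rep_cost N1 N2 ss"
    if rs: "rs \<in> tensor_reps A1 A2 \<phi>" and ss: "ss \<in> tensor_reps A1 A2 \<psi>" for rs ss
  proof -
    have "?m \<le> tensor_rep_cost M1 M2 (tensor_rep_mult rs ss)"
      using assms(5-8) by (intro tensor_norm_le_cost tensor_rep_mult_in_tensor_reps[OF rs ss])
    also have "\<dots> \<le> (b1 * b2) * tensor_rep_cost N1 N2 rs * tensor_rep_cost N1 N2 ss"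
    proof -
      have rs_set: "set rs \<subseteq> A1 \<times> A2" and ss_set: "set ss \<subseteq> A1 \<times> A2"
        using rs ss by (simp_all add: tensor_reps_def)
      from rs_set ss_set assms(5-8,11,12) show ?thesis by (rule tensor_rep_cost_tensor_rep_mult)
    qed
    finally show ?thesis .
  qed
  have inf_psi: "?m \<le> ((b1 * b2) * tensor_rep_cost N1 N2 rs) * tensor_norm A1 A2 N1 N2 \<psi>"
    if rs: "rs \<in> tensor_reps A1 A2 \<phi>" for rs
  proof (rule tensor_norm_greatest[OF assms(2)])
    from rs have "set rs \<subseteq> A1 \<times> A2" by (simp add: tensor_reps_def)
    from tensor_rep_cost_nonneg[OF this assms(9,10)] assms(3,4)
    show "0 \<le> (b1 * b2) * tensor_rep_cost N1 N2 rs" by simp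
  qed (use cost_bound rs in simp)
  have "?m \<le> ((b1 * b2) * tensor_norm A1 A2 N1 N2 \<psi>) * tensor_norm A1 A2 N1 N2 \<phi>"
  proof (rule tensor_norm_greatest[OF assms(1)])
    show "0 \<le> (b1 * b2) * tensor_norm A1 A2 N1 N2 \<psi>"
      using assms(2-4,9,10) by (simp add: tensor_norm_nonneg)
  qed (use inf_psi in \<open>simp add: algebra_simps\<close>)
  then show ?thesis by (simp add: algebra_simps)
qed

theorem lemma6p2:
  fixes A1 :: "('a::t2_space \<Rightarrow> complex) set" and A2 :: "('b::t2_space \<Rightarrow> complex) set"
    and M1 N1 :: "('a \<Rightarrow> complex) \<Rightarrow> real" and M2 N2 :: "('b \<Rightarrow> complex) \<Rightarrow> real"
  assumes "locally_compact_space (euclidean :: 'a topology)"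
    and "locally_compact_space (euclidean :: 'b topology)"
    and "subalgebra_Cc A1" and "subalgebra_Cc A2"
    and "uniform_norm_on A1 M1" and "uniform_norm_on A1 N1"
    and "uniform_norm_on A2 M2" and "uniform_norm_on A2 N2"
    and "norm_preceq A1 M1 N1" and "norm_preceq A2 M2 N2"
  shows "norm_preceq (tensor_alg A1 A2) (tensor_norm A1 A2 M1 M2) (tensor_norm A1 A2 N1 N2)"
proof -
  obtain a1 b1 where "a1 > 0" "b1 > 0" "\<forall>f\<in>A1. M1 f \<le> a1 * N1 f"
    "\<forall>f\<in>A1. \<forall>g\<in>A1. M1 (\<lambda>x. f x * g x) \<le> b1 * N1 f * N1 g"
    using assms(9) unfolding norm_preceq_def by blast
  moreover obtain a2 b2 where "a2 > 0" "b2 > 0" "\<forall>f\<in>A2. M2 f \<le> a2 * N2 f"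
    "\<forall>f\<in>A2. \<forall>g\<in>A2. M2 (\<lambda>x. f x * g x) \<le> b2 * N2 f * N2 g"
    using assms(10) unfolding norm_preceq_def by blast
  moreover note assms(5-8)[THEN uniform_norm_on_nonneg] assms(3,4)[THEN subalgebra_Cc_mult]
  ultimately show ?thesis
    unfolding norm_preceq_def
    by (intro exI[of _ "a1 * a2"] exI[of _ "b1 * b2"])
      (simp add: tensor_norm_mono tensor_norm_mult)
qed

end
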